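(* Let $k$ be a positive integer. Suppose that $h:\mathbb{H}\to\mathbb{C}$ is holomorphic, $M\in\mathrm{SL}_2(\mathbb{R})$ is elliptic of infinite order, and $\zeta\in\mathbb{C}^\times$ is a root of unity such that $h|M=\zeta h$. Then $h=0$.
   Context: $\mathbb{H}$ is the upper half-plane. For $\gamma=\begin{pmatrix}a&b\\c&d\end{pmatrix}\in\mathrm{GL}_2^+(\mathbb{R})$, $h|\gamma(z)=(\det\gamma)^{k/2}(cz+d)^{-k}h\big(\frac{az+b}{cz+d}\big)$. *)

theory Defs
  imports "HOL-Analysis.Analysis"
begin

definition upper_half_plane :: "complex set" where
  "upper_half_plane = {z. Im z > 0}"

definition SL2R :: "(real^2^2) set" where
  "SL2R = {M. det M = 1}"

definition GL2plus :: "(real^2^2) set" where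
  "GL2plus = {M. det M > 0}"

primrec matpow :: "real^2^2 \<Rightarrow> nat \<Rightarrow> real^2^2" where
  "matpow M 0 = mat 1"
| "matpow M (Suc n) = M ** matpow M n"

definition elliptic :: "real^2^2 \<Rightarrow> bool" where
  "elliptic M \<longleftrightarrow> M \<in> SL2R \<and> \<bar>M$1$1 + M$2$2\<bar> < 2"

definition infinite_order :: "real^2^2 \<Rightarrow> bool" where
  "infinite_order M \<longleftrightarrow> (\<forall>n::nat. n > 0 \<longrightarrow> matpow M n \<noteq> mat 1)"

definition root_of_unity :: "complex \<Rightarrow> bool" where
  "root_of_unity \<zeta> \<longleftrightarrow> (\<exists>n::nat. n > 0 \<and> \<zeta> ^ n = 1)"

definition slash :: "int \<Rightarrow> (complex \<Rightarrow> complex) \<Rightarrow> real^2^2 \<Rightarrow> complex \<Rightarrow> complex" where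
  "slash k h \<gamma> z =
     complex_of_real (det \<gamma> powr (real_of_int k / 2))
     * (complex_of_real (\<gamma>$2$1) * z + complex_of_real (\<gamma>$2$2)) powi (-k)
     * h ((complex_of_real (\<gamma>$1$1) * z + complex_of_real (\<gamma>$1$2))
          / (complex_of_real (\<gamma>$2$1) * z + complex_of_real (\<gamma>$2$2)))"

end

theory Submission
  imports Defs "HOL-Complex_Analysis.Cauchy_Integral_Formula"
begin

text \<open>
  An elliptic \<open>M\<close> with eigenvalues \<open>\<mu>, cnj \<mu>\<close> on the unit circle fixes a point \<open>\<tau>\<close> of the
  upper half-plane, and the Cayley map \<open>w \<mapsto> (\<tau> - cnj \<tau> w) / (1 - w)\<close> from the unit disc onto
  the upper half-plane conjugates the Moebius action of \<open>M\<close> to the rotation \<open>w \<mapsto> cnj \<mu>^2 w\<close>.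
  Pulling \<open>h\<close> back to the disc with the weight-\<open>k\<close> factor \<open>(1 - w)^-k\<close> turns \<open>h|M = \<zeta> h\<close> into
  \<open>\<Phi>(cnj \<mu>^2 w) = \<zeta> \<mu>^k \<Phi>(w)\<close>. A nonzero \<open>n\<close>-th Taylor coefficient of \<open>\<Phi>\<close> would force
  \<open>cnj \<mu>^(2n) = \<zeta> \<mu>^k\<close>, i.e. \<open>\<zeta> \<mu>^(k+2n) = 1\<close>, so \<open>\<mu>\<close> would be a root of unity; but then so
  would be \<open>M\<close>, since \<open>M^n\<close> is a combination of \<open>M\<close> and \<open>1\<close> whose coefficients are expressions
  in \<open>\<mu>^n\<close> and \<open>cnj \<mu>^n\<close>.
\<close>

lemma holomorphic_scaling_eigenfunction_eq_0:
  fixes f :: "complex \<Rightarrow> complex"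
  assumes hol: "f holomorphic_on ball 0 r" and l: "cmod l \<le> 1"
    and eigen: "\<And>w. w \<in> ball 0 r \<Longrightarrow> f (l * w) = C * f w"
    and not_power: "\<And>n. l^n \<noteq> C"
    and w: "w \<in> ball 0 r"
  shows "f w = 0"
proof -
  have lball: "l * w \<in> ball 0 r" if "w \<in> ball 0 r" for w
    using that l mult_left_le_one_le[of "cmod w" "cmod l"] by (simp add: norm_mult)
  have r: "0 \<in> ball 0 r"
    using w norm_ge_zero[of w] unfolding mem_ball dist_0_norm dist_self by linarith
  have "(deriv^^n) f 0 = 0" for n
  proof -
    have "l^n * (deriv^^n) f 0 = (deriv^^n) (\<lambda>w. f (l * w)) 0"
      using higher_deriv_compose_linear[OF hol open_ball open_ball r lball] by simp
    also have "\<dots> = (deriv^^n) (\<lambda>w. C * f w) 0"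
      by (rule higher_deriv_cong_ev[OF _ refl])
         (use eventually_nhds_in_open[OF open_ball r] eigen in \<open>auto elim!: eventually_mono\<close>)
    also have "\<dots> = C * (deriv^^n) f 0"
      by (rule higher_deriv_cmult[OF hol r open_ball])
    finally show ?thesis
      using not_power[of n] by (metis mult_cancel_right)
  qed
  then have "(\<lambda>n. 0) sums f w"
    using holomorphic_power_series[OF hol w] by simp
  then show ?thesis
    using sums_unique2 sums_zero by blast
qed

lemma matpow_eigenvalue_formula:
  fixes M :: "real^2^2" and \<mu> \<nu> :: complex
  assumes tr: "\<mu> + \<nu> = of_real (M$1$1 + M$2$2)" and det: "\<mu> * \<nu> = of_real (det M)"
    and ne: "\<mu> \<noteq> \<nu>"
  shows "of_real (matpow M n $ i $ j) = (\<mu>^n - \<nu>^n) / (\<mu> - \<nu>) * of_real (M$i$j)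
           - (\<mu>^n * \<nu> - \<nu>^n * \<mu>) / (\<mu> - \<nu>) * of_real (mat 1 $ i $ j)"
proof (induction n arbitrary: i j)
  case 0
  then show ?case using ne by (simp add: field_simps)
next
  case (Suc n)
  define U where "U = (\<mu>^n - \<nu>^n) / (\<mu> - \<nu>)"
  define V where "V = (\<mu>^n * \<nu> - \<nu>^n * \<mu>) / (\<mu> - \<nu>)"
  have "\<mu>^Suc n - \<nu>^Suc n = (\<mu> + \<nu>) * (\<mu>^n - \<nu>^n) - (\<mu>^n * \<nu> - \<nu>^n * \<mu>)"
    by (simp add: algebra_simps)
  then have U': "(\<mu>^Suc n - \<nu>^Suc n) / (\<mu> - \<nu>) = (\<mu> + \<nu>) * U - V"
    unfolding U_def V_def by (metis diff_divide_distrib times_divide_eq_right)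
  have "\<mu>^Suc n * \<nu> - \<nu>^Suc n * \<mu> = \<mu> * \<nu> * (\<mu>^n - \<nu>^n)"
    by (simp add: algebra_simps)
  then have V': "(\<mu>^Suc n * \<nu> - \<nu>^Suc n * \<mu>) / (\<mu> - \<nu>) = \<mu> * \<nu> * U"
    by (simp add: U_def)
  have "of_real (matpow M (Suc n) $ i $ j) =
      of_real (M$i$1) * of_real (matpow M n $ 1 $ j) + of_real (M$i$2) * of_real (matpow M n $ 2 $ j)"
    by (simp add: matrix_matrix_mult_def sum_2)
  also have "\<dots> = ((\<mu> + \<nu>) * U - V) * of_real (M$i$j) - \<mu> * \<nu> * U * of_real (mat 1 $ i $ j)"
    unfolding Suc.IH U_def[symmetric] V_def[symmetric] tr det
    using exhaust_2[of i] exhaust_2[of j]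
    by (auto simp: det_2 mat_def algebra_simps)
  finally show ?case unfolding U' V' .
qed

lemma matpow_eq_1_if_eigenvalues_roots_of_unity:
  fixes M :: "real^2^2" and \<mu> \<nu> :: complex
  assumes "\<mu> + \<nu> = of_real (M$1$1 + M$2$2)" "\<mu> * \<nu> = of_real (det M)" "\<mu> \<noteq> \<nu>"
    and "\<mu>^m = 1" "\<nu>^m = 1"
  shows "matpow M m = mat 1"
proof -
  have "(\<nu> - \<mu>) / (\<mu> - \<nu>) = -1"
    using assms(3) by (simp add: field_simps)
  then have "of_real (matpow M m $ i $ j) = (of_real (mat 1 $ i $ j) :: complex)" for i j
    using matpow_eigenvalue_formula[OF assms(1-3), of m i j] assms(4,5) by simp
  then show ?thesis by (simp add: vec_eq_iff)
qed

lemma elliptic_lower_left_nonzero: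
  assumes "elliptic M"
  shows "M$2$1 \<noteq> 0"
proof
  assume "M$2$1 = 0"
  then have "M$1$1 * M$2$2 = 1"
    using assms by (simp add: elliptic_def SL2R_def det_2)
  then have "(M$1$1 + M$2$2)^2 = (M$1$1 - M$2$2)^2 + 4"
    by (simp add: power2_eq_square algebra_simps)
  moreover have "(M$1$1 + M$2$2)^2 < 2^2"
    using assms by (intro power2_strict_mono) (simp add: elliptic_def)
  ultimately show False
    using zero_le_power2[of "M$1$1 - M$2$2"] by simp
qed

lemma elliptic_fixed_point:
  fixes M :: "real^2^2"
  assumes "elliptic M"
  obtains \<mu> \<tau> where "cmod \<mu> = 1" "Im \<mu> \<noteq> 0" "\<mu> + cnj \<mu> = of_real (M$1$1 + M$2$2)"
    "of_real (M$2$1) * \<tau> = \<mu> - of_real (M$2$2)" "Im \<tau> > 0"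
proof
  define t where "t = M$1$1 + M$2$2"
  define c where "c = M$2$1"
  define s where "s = sqrt (4 - t^2)"
  \<comment> \<open>\<open>Im \<mu>\<close> gets the sign of \<open>c\<close>, which puts the fixed point \<open>(\<mu> - d) / c\<close> in the upper half-plane.\<close>
  define \<mu> where "\<mu> = Complex (t/2) (sgn c * s / 2)"
  have "t^2 < 2^2"
    using assms by (intro power2_strict_mono) (simp add: elliptic_def t_def)
  then have s: "s > 0" "s^2 = 4 - t^2"
    by (simp_all add: s_def)
  have c: "c \<noteq> 0"
    using elliptic_lower_left_nonzero[OF assms] by (simp add: c_def)
  show "cmod \<mu> = 1"
    using s c by (simp add: \<mu>_def cmod_def power_divide power_mult_distrib sgn_if field_simps)
  show "Im \<mu> \<noteq> 0" "\<mu> + cnj \<mu> = of_real t"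
    using s c by (simp_all add: \<mu>_def complex_eq_iff sgn_if)
  show "of_real c * ((\<mu> - of_real (M$2$2)) / of_real c) = \<mu> - of_real (M$2$2)"
    using c by simp
  have "Im ((\<mu> - of_real (M$2$2)) / of_real c) = s / (2 * \<bar>c\<bar>)"
    using c by (simp add: \<mu>_def Im_divide_of_real sgn_if abs_if)
  then show "Im ((\<mu> - of_real (M$2$2)) / of_real c) > 0"
    using s c by simp
qed

lemma eigenvalue_power_ne_1_if_infinite_order:
  fixes M :: "real^2^2"
  assumes "infinite_order M" "det M = 1" "cmod \<mu> = 1" "Im \<mu> \<noteq> 0"
    and "\<mu> + cnj \<mu> = of_real (M$1$1 + M$2$2)" "m > 0"
  shows "\<mu>^m \<noteq> 1"
proof
  assume \<mu>: "\<mu>^m = 1"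
  then have "cnj \<mu> ^ m = 1"
    by (metis complex_cnj_one complex_cnj_power)
  moreover have "\<mu> * cnj \<mu> = of_real (det M)"
    using assms(2,3) by (simp add: complex_norm_square[symmetric])
  moreover have "\<mu> \<noteq> cnj \<mu>"
    using assms(4) by (metis cnj.sel(2) neg_equal_zero)
  ultimately have "matpow M m = mat 1"
    using matpow_eq_1_if_eigenvalues_roots_of_unity[OF assms(5)] \<mu> by blast
  then show False
    using assms(1,6) by (simp add: infinite_order_def)
qed

lemma cnj_square_power_ne_root_of_unity_times_power:
  fixes \<mu> \<zeta> :: complex
  assumes "cmod \<mu> = 1" and not_root: "\<And>m. m > 0 \<Longrightarrow> \<mu>^m \<noteq> 1"
    and "root_of_unity \<zeta>" and "K > 0"
  shows "(cnj \<mu>^2)^n \<noteq> \<zeta> * \<mu>^K"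
proof
  assume eq: "(cnj \<mu>^2)^n = \<zeta> * \<mu>^K"
  obtain N where N: "N > 0" "\<zeta>^N = 1"
    using assms(3) by (auto simp: root_of_unity_def)
  have "\<mu> * cnj \<mu> = 1"
    using assms(1) by (simp add: complex_norm_square[symmetric])
  have "\<zeta> * \<mu>^(K + 2 * n) = (\<zeta> * \<mu>^K) * (\<mu>^2)^n"
    by (simp add: power_add power_mult)
  also have "\<dots> = ((\<mu> * cnj \<mu>)^2)^n"
    unfolding eq[symmetric] by (simp add: power_mult_distrib mult.commute)
  also have "\<dots> = 1"
    using \<open>\<mu> * cnj \<mu> = 1\<close> by simp
  finally have "\<zeta> * \<mu>^(K + 2 * n) = 1" .
  then have "\<mu>^((K + 2 * n) * N) = 1"
    using N by (metis mult_1 power_mult power_mult_distrib power_one)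
  then show False
    using not_root[of "(K + 2 * n) * N"] N assms(4) by simp
qed

definition cayley :: "complex \<Rightarrow> complex \<Rightarrow> complex" where
  "cayley \<tau> w = (\<tau> - cnj \<tau> * w) / (1 - w)"

lemma cayley_image_ball:
  assumes "Im \<tau> > 0"
  shows "cayley \<tau> ` ball 0 1 = upper_half_plane"
proof (intro equalityI subsetI)
  fix z assume "z \<in> cayley \<tau> ` ball 0 1"
  then obtain w where w: "cmod w < 1" and z: "z = cayley \<tau> w"
    by auto
  have "Re w < 1"
    using w abs_Re_le_cmod[of w] by linarith
  then have "Re (1 - w)^2 + Im (1 - w)^2 > 0"
    by (simp add: add_pos_nonneg)
  moreover have "Re w^2 + Im w^2 < 1"
    using w by (simp add: cmod_def)
  moreover have "Im (\<tau> - cnj \<tau> * w) * Re (1 - w) - Re (\<tau> - cnj \<tau> * w) * Im (1 - w)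
      = Im \<tau> * (1 - Re w^2 - Im w^2)"
    by (simp add: algebra_simps power2_eq_square)
  ultimately show "z \<in> upper_half_plane"
    using assms by (simp add: z cayley_def upper_half_plane_def Im_divide)
next
  fix z assume "z \<in> upper_half_plane"
  then have z: "Im z > 0"
    by (simp add: upper_half_plane_def)
  define w where "w = (z - \<tau>) / (z - cnj \<tau>)"
  have nz: "z - cnj \<tau> \<noteq> 0" "\<tau> - cnj \<tau> \<noteq> 0"
    using assms z by (auto simp: complex_eq_iff)
  have "cmod (z - \<tau>)^2 < cmod (z - cnj \<tau>)^2"
    unfolding cmod_power2 using assms z by (simp add: power2_eq_square algebra_simps)
  then have "cmod w < 1"
    using nz by (simp add: w_def norm_divide divide_less_eq power2_less_imp_less)
  have "1 - w = (\<tau> - cnj \<tau>) / (z - cnj \<tau>)"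
    and "\<tau> - cnj \<tau> * w = z * (\<tau> - cnj \<tau>) / (z - cnj \<tau>)"
    using nz by (simp_all add: w_def field_simps)
  then have "cayley \<tau> w = z"
    using nz by (simp add: cayley_def)
  with \<open>cmod w < 1\<close> show "z \<in> cayley \<tau> ` ball 0 1"
    by force
qed

lemma mobius_cayley_eq_cayley_rotation:
  fixes M :: "real^2^2"
  assumes det: "det M = 1" and \<mu>: "cmod \<mu> = 1" and tr: "\<mu> + cnj \<mu> = of_real (M$1$1 + M$2$2)"
    and c: "M$2$1 \<noteq> 0" and \<tau>: "of_real (M$2$1) * \<tau> = \<mu> - of_real (M$2$2)"
    and w: "cmod w < 1"
  shows "of_real (M$2$1) * cayley \<tau> w + of_real (M$2$2) = \<mu> * (1 - cnj \<mu>^2 * w) / (1 - w)"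
    and "(of_real (M$1$1) * cayley \<tau> w + of_real (M$1$2))
           / (of_real (M$2$1) * cayley \<tau> w + of_real (M$2$2)) = cayley \<tau> (cnj \<mu>^2 * w)"
proof -
  define a b c d where "a = complex_of_real (M$1$1)" "b = complex_of_real (M$1$2)"
    "c = complex_of_real (M$2$1)" "d = complex_of_real (M$2$2)"
  define \<nu> where "\<nu> = cnj \<mu>"
  have \<mu>\<nu>: "\<mu> * \<nu> = 1"
    using \<mu> by (simp add: \<nu>_def complex_norm_square[symmetric])
  have D: "a * d - b * c = 1"
    using det unfolding a_b_c_d_def det_2 by (metis of_real_1 of_real_diff of_real_mult)
  have T: "\<mu> + \<nu> = a + d" and c0: "c \<noteq> 0"
    using tr c by (simp_all add: a_b_c_d_def \<nu>_def)
  have \<tau>1: "c * \<tau> = \<mu> - d"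
    using \<tau> by (simp add: a_b_c_d_def)
  have \<tau>2: "c * cnj \<tau> = \<nu> - d"
    using arg_cong[OF \<tau>1, of cnj]
    unfolding complex_cnj_mult complex_cnj_diff a_b_c_d_def complex_cnj_complex_of_real \<nu>_def .
  have "c * (a * \<tau> + b) = c * (\<mu> * \<tau>)" "c * (a * cnj \<tau> + b) = c * (\<nu> * cnj \<tau>)"
    using D \<mu>\<nu> T \<tau>1 \<tau>2 by algebra+
  then have "a * \<tau> + b = \<mu> * \<tau>" "a * cnj \<tau> + b = \<nu> * cnj \<tau>"
    using c0 by simp_all
  then have num: "a * (\<tau> - cnj \<tau> * w) + b * (1 - w) = \<mu> * (\<tau> - cnj \<tau> * (\<nu>^2 * w))"
    using \<mu>\<nu> by algebra
  have den: "c * (\<tau> - cnj \<tau> * w) + d * (1 - w) = \<mu> * (1 - \<nu>^2 * w)"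
    using \<tau>1 \<tau>2 \<mu>\<nu> by algebra
  have "cmod (\<nu>^2 * w) < 1"
    using w \<mu> by (simp add: \<nu>_def norm_mult norm_power)
  then have "1 - w \<noteq> 0" "1 - \<nu>^2 * w \<noteq> 0" "\<mu> \<noteq> 0"
    using w \<mu> by auto
  then have cz: "c * cayley \<tau> w + d = \<mu> * (1 - \<nu>^2 * w) / (1 - w)"
    and az: "a * cayley \<tau> w + b = \<mu> * (\<tau> - cnj \<tau> * (\<nu>^2 * w)) / (1 - w)"
    using num den by (simp_all add: cayley_def field_simps)
  with \<open>1 - w \<noteq> 0\<close> \<open>1 - \<nu>^2 * w \<noteq> 0\<close> \<open>\<mu> \<noteq> 0\<close>
  show "c * cayley \<tau> w + d = \<mu> * (1 - \<nu>^2 * w) / (1 - w)"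
    and "(a * cayley \<tau> w + b) / (c * cayley \<tau> w + d) = cayley \<tau> (\<nu>^2 * w)"
    by (simp_all add: cayley_def)
qed

definition cayley_pullback :: "nat \<Rightarrow> (complex \<Rightarrow> complex) \<Rightarrow> complex \<Rightarrow> complex \<Rightarrow> complex" where
  "cayley_pullback K h \<tau> w = h (cayley \<tau> w) / (1 - w)^K"

lemma holomorphic_on_cayley_pullback:
  assumes "h holomorphic_on upper_half_plane" and "Im \<tau> > 0"
  shows "cayley_pullback K h \<tau> holomorphic_on ball 0 1"
proof -
  have "cayley \<tau> holomorphic_on ball 0 1"
    unfolding cayley_def by (intro holomorphic_intros) auto
  then have "(h \<circ> cayley \<tau>) holomorphic_on ball 0 1"
    using holomorphic_on_compose assms cayley_image_ball by metis
  then show ?thesis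
    unfolding cayley_pullback_def o_def by (intro holomorphic_intros) auto
qed

lemma cayley_pullback_of_slash_eigenfunction:
  fixes M :: "real^2^2" and h :: "complex \<Rightarrow> complex"
  assumes det: "det M = 1" and \<mu>: "cmod \<mu> = 1" and "\<mu> + cnj \<mu> = of_real (M$1$1 + M$2$2)"
    and "M$2$1 \<noteq> 0" and "of_real (M$2$1) * \<tau> = \<mu> - of_real (M$2$2)" and \<tau>: "Im \<tau> > 0"
    and eigen: "\<forall>z\<in>upper_half_plane. slash (int K) h M z = \<zeta> * h z" and w: "w \<in> ball 0 1"
  shows "cayley_pullback K h \<tau> (cnj \<mu>^2 * w) = \<zeta> * \<mu>^K * cayley_pullback K h \<tau> w"
proof -
  have w: "cmod w < 1"
    using w by simp
  note rotation = mobius_cayley_eq_cayley_rotation[OF assms(1-5) w]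
  have "cmod (cnj \<mu>^2 * w) < 1"
    using w \<mu> by (simp add: norm_mult norm_power)
  then have nz: "1 - w \<noteq> 0" "1 - cnj \<mu>^2 * w \<noteq> 0" "\<mu> \<noteq> 0"
    using w \<mu> by auto
  have "cayley \<tau> w \<in> upper_half_plane"
    using cayley_image_ball[OF \<tau>] w by auto
  then have "slash (int K) h M (cayley \<tau> w) = \<zeta> * h (cayley \<tau> w)"
    using eigen by blast
  then have "h (cayley \<tau> (cnj \<mu>^2 * w)) = \<zeta> * h (cayley \<tau> w) * (\<mu> * (1 - cnj \<mu>^2 * w) / (1 - w))^K"
    using nz unfolding slash_def det rotation(2) unfolding rotation(1)
    by (simp add: power_int_minus field_simps)
  also have "\<dots> = \<zeta> * \<mu>^K * (h (cayley \<tau> w) / (1 - w)^K) * (1 - cnj \<mu>^2 * w)^K"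
    by (simp add: power_divide power_mult_distrib)
  finally show ?thesis
    using nz by (simp add: cayley_pullback_def)
qed

theorem lemma4p2:
  fixes k :: int and h :: "complex \<Rightarrow> complex" and M :: "real^2^2" and \<zeta> :: complex
  assumes "k > 0"
    and "h holomorphic_on upper_half_plane"
    and "M \<in> SL2R" and "elliptic M" and "infinite_order M"
    and "\<zeta> \<noteq> 0" and "root_of_unity \<zeta>"
    and "\<forall>z\<in>upper_half_plane. slash k h M z = \<zeta> * h z"
  shows "\<forall>z\<in>upper_half_plane. h z = 0"
proof
  have det: "det M = 1"
    using assms(3) by (simp add: SL2R_def)
  obtain \<mu> \<tau> where \<mu>: "cmod \<mu> = 1" "Im \<mu> \<noteq> 0" "\<mu> + cnj \<mu> = of_real (M$1$1 + M$2$2)"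
    and \<tau>: "of_real (M$2$1) * \<tau> = \<mu> - of_real (M$2$2)" "Im \<tau> > 0"
    using elliptic_fixed_point[OF assms(4)] .
  obtain K where K: "k = int K" "K > 0"
    using assms(1) by (metis pos_int_cases)
  have eigen: "cayley_pullback K h \<tau> (cnj \<mu>^2 * w) = \<zeta> * \<mu>^K * cayley_pullback K h \<tau> w"
    if "w \<in> ball 0 1" for w
    using cayley_pullback_of_slash_eigenfunction[OF det \<mu>(1,3)
        elliptic_lower_left_nonzero[OF assms(4)] \<tau>] assms(8) K that by simp
  have not_power: "(cnj \<mu>^2)^n \<noteq> \<zeta> * \<mu>^K" for n
    by (rule cnj_square_power_ne_root_of_unity_times_power[OF \<mu>(1)
          eigenvalue_power_ne_1_if_infinite_order[OF assms(5) det \<mu>] assms(7) K(2)])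
  have "cmod (cnj \<mu>^2) \<le> 1"
    using \<mu>(1) by (simp add: norm_power)
  note pullback_eq_0 = holomorphic_scaling_eigenfunction_eq_0[OF
      holomorphic_on_cayley_pullback[OF assms(2) \<tau>(2)] this eigen not_power]
  fix z assume "z \<in> upper_half_plane"
  then obtain w where w: "w \<in> ball 0 1" "z = cayley \<tau> w"
    using cayley_image_ball[OF \<tau>(2)] by blast
  then have "w \<noteq> 1"
    by auto
  with w pullback_eq_0 show "h z = 0"
    by (auto simp: cayley_pullback_def)
qed

end
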